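(* Let $p,q$ be positive integers with $\gcd(p,q)=1$, $p$ odd and $p/(2q)-1\in(-1,1)$. Then \[ \mathcal{O}(p/2q)=\Big\{\pm A\Big(\frac{(2\ell+1)^2}{4q^2}\Big):\ \ell\in\{0,1,\dots,q-1\}\Big\} \] and \[ \mathcal{E}(p/2q)=\{\pm A(\ell^2/q^2):\ \ell\in\{0,1,\dots,q-1\}\}. \]
   Context: Nodes: $x_{k,n}:=2k/n-1$, $k=0,\dots,n$; $D_n(x)=\sum_{k=0}^n(-1)^k\frac{1}{x-x_{k,n}}$. $A(y)=\sum_{k=0}^\infty(-1)^k\frac{4k+2}{(2k+1)^2-y}$ for $y\in[0,1)$. A sequence $n_j$ is a strictly increasing map $\mathbb{N}\to\mathbb{N}$, odd (even) if all $n_j$ are odd (even); $x$ is regular for $n_j$ if there is $j_0$ with $x\notin\{x_{0,n_j},\dots,x_{n_j,n_j}\}$ for $j\ge j_0$. For a rational $r$ with $x=r-1\in(-1,1)$, $\mathcal{O}(r)$ is the set of $L\in\overline{\mathbb{R}}=\mathbb{R}\cup\{\pm\infty\}$ such that $\lim_{j\to\infty}D_{n_j}(x)/n_j=L$ for some odd sequence $n_j$ for which $x$ is regular; $\mathcal{E}(r)$ is defined likewise with even sequences. Here $p/2q$ means $p/(2q)$. *)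

theory Defs
  imports "HOL-Analysis.Analysis"
begin

definition node :: "nat \<Rightarrow> nat \<Rightarrow> real" where
  "node k n = 2 * real k / real n - 1"

definition D :: "nat \<Rightarrow> real \<Rightarrow> real" where
  "D n x = (\<Sum>k = 0..n. (-1) ^ k / (x - node k n))"

definition A :: "real \<Rightarrow> real" where
  "A y = (\<Sum>k. (-1) ^ k * (4 * real k + 2) / ((2 * real k + 1)^2 - y))"

definition odd_seq :: "(nat \<Rightarrow> nat) \<Rightarrow> bool" where
  "odd_seq ns \<longleftrightarrow> strict_mono ns \<and> (\<forall>j. odd (ns j))"

definition even_seq :: "(nat \<Rightarrow> nat) \<Rightarrow> bool" where
  "even_seq ns \<longleftrightarrow> strict_mono ns \<and> (\<forall>j. even (ns j))"

definition regular :: "real \<Rightarrow> (nat \<Rightarrow> nat) \<Rightarrow> bool" where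
  "regular x ns \<longleftrightarrow> (\<exists>j0. \<forall>j\<ge>j0. x \<notin> {node k (ns j) | k. k \<le> ns j})"

definition Oset :: "real \<Rightarrow> ereal set" where
  "Oset r = {L. \<exists>ns. odd_seq ns \<and> regular (r - 1) ns \<and>
      ((\<lambda>j. ereal (D (ns j) (r - 1) / real (ns j))) \<longlongrightarrow> L) sequentially}"

definition Eset :: "real \<Rightarrow> ereal set" where
  "Eset r = {L. \<exists>ns. even_seq ns \<and> regular (r - 1) ns \<and>
      ((\<lambda>j. ereal (D (ns j) (r - 1) / real (ns j))) \<longlongrightarrow> L) sequentially}"

end

theory Submission
  imports Defs "HOL-Real_Asymp.Real_Asymp" "HOL-Number_Theory.Cong"
begin

text \<open>Write \<open>n (x + 1) / 2 = k + t\<close> with \<open>k\<close> an integer and \<open>0 < t < 1\<close>. Splitting \<open>D n x\<close> at the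
  node nearest below \<open>x\<close> gives two alternating series in \<open>1 / (t + i)\<close> and \<open>1 / (1 - t + i)\<close>, so
  \<open>D n x / n\<close> tends to \<open>(-1)^k A ((1 - 2t)^2)\<close> along any sequence on which \<open>t\<close> and the parity
  of \<open>k\<close> are fixed. For \<open>x = p / 2q - 1\<close> both are determined by the residue of \<open>n p\<close> modulo
  \<open>8q\<close>; as \<open>p\<close> is odd and invertible modulo \<open>8q\<close>, odd (even) \<open>n\<close> realise exactly the odd (even)
  residues, and regularity excludes the residues divisible by \<open>4q\<close>.\<close>

section \<open>Alternating series for \<open>D n x / n\<close>\<close>

lemma summable_alternating_inverse:
  fixes c :: real
  assumes "0 < c"
  shows "summable (\<lambda>k. (-1)^k / (c + real k))"
proof -
  have "(\<lambda>k. 1 / (c + real k)) \<longlonglongrightarrow> 0"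
    by real_asymp
  then have "summable (\<lambda>k. (-1)^k * (1 / (c + real k)))"
    by (rule summable_Leibniz'(1)) (use assms in \<open>auto simp: frac_le\<close>)
  then show ?thesis
    by simp
qed

lemma A_eq_alternating_sums:
  fixes t :: real
  assumes "0 < t" "t < 1"
  shows "A ((1 - 2*t)^2) = ((\<Sum>k. (-1)^k / (t + real k)) + (\<Sum>k. (-1)^k / (1 - t + real k))) / 2"
proof -
  have partial_fractions: "((-1)^k / (t + real k) + (-1)^k / (1 - t + real k)) / 2
      = (-1)^k * (4 * real k + 2) / ((2 * real k + 1)^2 - (1 - 2*t)^2)" for k :: nat
  proof -
    define a b where "a = t + real k" and "b = 1 - t + real k"
    have "a > 0" "b > 0"
      using assms by (auto simp: a_def b_def)
    moreover have "4 * real k + 2 = 2 * (a + b)"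
      by (simp add: a_def b_def)
    moreover have "(2 * real k + 1)^2 - (1 - 2*t)^2 = 4 * a * b"
      by (simp add: a_def b_def power2_eq_square algebra_simps)
    ultimately show ?thesis
      unfolding a_def[symmetric] b_def[symmetric] by (simp add: field_simps)
  qed
  have "(\<lambda>k. ((-1)^k / (t + real k) + (-1)^k / (1 - t + real k)) / 2) sums
          (((\<Sum>k. (-1)^k / (t + real k)) + (\<Sum>k. (-1)^k / (1 - t + real k))) / 2)"
    using assms by (intro sums_divide sums_add summable_sums summable_alternating_inverse) auto
  then show ?thesis
    unfolding A_def partial_fractions by (rule sums_unique[symmetric])
qed

lemma sum_atLeast0AtMost_split_reflect:
  fixes f :: "nat \<Rightarrow> 'a::comm_monoid_add"
  assumes "k0 \<le> n"
  shows "(\<Sum>k = 0..n. f k) = (\<Sum>i\<le>k0. f (k0 - i)) + (\<Sum>i<n - k0. f (Suc k0 + i))"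
proof -
  obtain d where n: "n = k0 + d"
    using assms le_Suc_ex by blast
  have "(\<Sum>k = 0..n. f k) = (\<Sum>k\<le>k0. f k) + (\<Sum>k = Suc k0..k0 + d. f k)"
    unfolding n atLeast0AtMost by (rule sum_up_index_split)
  also have "(\<Sum>k\<le>k0. f k) = (\<Sum>i\<le>k0. f (k0 - i))"
    using sum.nat_diff_reindex[of f "Suc k0"] by (simp add: lessThan_Suc_atMost)
  also have "(\<Sum>k = Suc k0..k0 + d. f k) = (\<Sum>i<d. f (Suc k0 + i))"
    using sum.shift_bounds_nat_ivl[of f 0 "Suc k0" d]
    by (simp add: atLeast0LessThan add.commute atLeastLessThanSuc_atLeastAtMost)
  finally show ?thesis
    unfolding n by simp
qed

lemma D_div_eq_alternating_sums:
  fixes x t :: real and n k0 :: nat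
  assumes "x < 1" and "0 < t" and split: "real n * (x + 1) / 2 = real k0 + t"
  shows "D n x / real n = (-1)^k0 *
    ((\<Sum>k\<le>k0. (-1)^k / (t + real k)) + (\<Sum>k<n - k0. (-1)^k / (1 - t + real k))) / 2"
proof -
  have "n \<noteq> 0"
    using split assms(2) by (cases n) auto
  moreover have "real k0 < real n"
  proof -
    have "real n * (x + 1) \<le> real n * 2"
      using assms(1) by (intro mult_left_mono) auto
    then show ?thesis
      using split assms(2) by linarith
  qed
  ultimately have n: "0 < n" and k0: "k0 \<le> n"
    by auto
  define f where "f k = (-1::real)^k / (real k0 + t - real k)" for k
  have summand: "(-1)^k / (x - node k n) = real n / 2 * f k" for k
  proof -
    have "x - node k n = 2 / real n * (real k0 + t - real k)"
      unfolding node_def split[symmetric] using n by (simp add: field_simps)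
    then show ?thesis
      by (simp add: f_def)
  qed
  have "D n x = real n / 2 * (\<Sum>k = 0..n. f k)"
    unfolding D_def summand by (rule sum_distrib_left[symmetric])
  also have "(\<Sum>k = 0..n. f k) = (\<Sum>i\<le>k0. f (k0 - i)) + (\<Sum>i<n - k0. f (Suc k0 + i))"
    by (rule sum_atLeast0AtMost_split_reflect[OF k0])
  also have "(\<Sum>i\<le>k0. f (k0 - i)) = (-1)^k0 * (\<Sum>k\<le>k0. (-1)^k / (t + real k))"
    unfolding sum_distrib_left f_def
  proof (intro sum.cong refl)
    fix i assume "i \<in> {..k0}"
    then have "(-1::real)^(k0 - i) = (-1)^k0 * (-1)^i"
      by (auto simp: minus_one_power_iff)
    then show "(-1)^(k0 - i) / (real k0 + t - real (k0 - i)) = (-1)^k0 * ((-1)^i / (t + real i))"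
      using \<open>i \<in> {..k0}\<close> by (simp add: of_nat_diff)
  qed
  also have "(\<Sum>i<n - k0. f (Suc k0 + i)) = (-1)^k0 * (\<Sum>k<n - k0. (-1)^k / (1 - t + real k))"
    unfolding sum_distrib_left f_def
  proof (intro sum.cong refl)
    fix i
    have denominator: "real k0 + t - real (Suc k0 + i) = - (1 - t + real i)"
      by simp
    show "(-1)^(Suc k0 + i) / (real k0 + t - real (Suc k0 + i)) = (-1)^k0 * ((-1)^i / (1 - t + real i))"
      by (simp only: denominator divide_minus_right power_add power_Suc) simp
  qed
  finally show ?thesis
    using n by (simp add: field_simps)
qed

lemma tendsto_D_div:
  fixes x t \<sigma> :: real and ns k :: "nat \<Rightarrow> nat"
  assumes x: "-1 < x" "x < 1" and t: "0 < t" "t < 1"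
    and ns: "filterlim ns at_top sequentially"
    and split: "\<And>j. real (ns j) * (x + 1) / 2 = real (k j) + t"
    and sign: "\<And>j. (-1)^k j = \<sigma>"
  shows "(\<lambda>j. D (ns j) x / real (ns j)) \<longlonglongrightarrow> \<sigma> * A ((1 - 2*t)^2)"
proof -
  have ns_real: "filterlim (\<lambda>j. real (ns j)) at_top sequentially"
    using ns filterlim_sequentially_iff_filterlim_real by blast
  have "filterlim (\<lambda>j. - t + (x + 1) / 2 * real (ns j)) at_top sequentially"
    using x by (intro filterlim_tendsto_add_at_top[OF tendsto_const]
        filterlim_tendsto_pos_mult_at_top[OF tendsto_const _ ns_real]) auto
  moreover have "real (k j) = - t + (x + 1) / 2 * real (ns j)" for j
    using split[of j] by (simp add: field_simps)
  ultimately have "filterlim k at_top sequentially"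
    by (simp add: filterlim_sequentially_iff_filterlim_real)
  then have lower: "filterlim (\<lambda>j. Suc (k j)) at_top sequentially"
    by (rule filterlim_compose[OF filterlim_Suc])
  have "filterlim (\<lambda>j. t + (1 - x) / 2 * real (ns j)) at_top sequentially"
    using x by (intro filterlim_tendsto_add_at_top[OF tendsto_const]
        filterlim_tendsto_pos_mult_at_top[OF tendsto_const _ ns_real]) auto
  moreover have "real (ns j - k j) = t + (1 - x) / 2 * real (ns j)" for j
  proof -
    have "real (ns j) * (x + 1) \<le> real (ns j) * 2"
      using x by (intro mult_left_mono) auto
    then have "real (k j) \<le> real (ns j)"
      using split[of j] t by linarith
    then show ?thesis
      using split[of j] by (simp add: of_nat_diff field_simps)
  qed
  ultimately have upper: "filterlim (\<lambda>j. ns j - k j) at_top sequentially"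
    by (simp add: filterlim_sequentially_iff_filterlim_real)
  define S1 S2 where "S1 = (\<lambda>m. \<Sum>i<m. (-1)^i / (t + real i))"
    and "S2 = (\<lambda>m. \<Sum>i<m. (-1)^i / (1 - t + real i))"
  have S_lim: "S1 \<longlonglongrightarrow> (\<Sum>i. (-1)^i / (t + real i))" "S2 \<longlonglongrightarrow> (\<Sum>i. (-1)^i / (1 - t + real i))"
    unfolding S1_def S2_def using t by (auto intro!: summable_LIMSEQ summable_alternating_inverse)
  have "(\<lambda>j. D (ns j) x / real (ns j)) = (\<lambda>j. \<sigma> * ((S1 (Suc (k j)) + S2 (ns j - k j)) / 2))"
    unfolding D_div_eq_alternating_sums[OF x(2) t(1) split] sign S1_def S2_def
    by (simp add: lessThan_Suc_atMost)
  also have "\<dots> \<longlonglongrightarrow> \<sigma> * A ((1 - 2*t)^2)"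
    unfolding A_eq_alternating_sums[OF t]
    using filterlim_compose[OF S_lim(1) lower] filterlim_compose[OF S_lim(2) upper]
    by (intro tendsto_mult_left tendsto_divide tendsto_add tendsto_const) auto
  finally show ?thesis .
qed

section \<open>Limits along residue classes of \<open>n p\<close> modulo \<open>8q\<close>\<close>

text \<open>The limit of \<open>D n x / n\<close> at \<open>x = p / 2q - 1\<close> along \<open>n\<close> with \<open>n p \<equiv> w (mod 8q)\<close>.\<close>
definition limit_value :: "nat \<Rightarrow> nat \<Rightarrow> real" where
  "limit_value q w = (-1)^(w div (4*q)) * A ((1 - 2 * (real (w mod (4*q)) / real (4*q)))^2)"

lemma mod_double_modulus:
  fixes a m :: nat
  shows "a mod (2*m) div m = a div m mod 2" and "a mod (2*m) mod m = a mod m"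
proof -
  have decomposition: "a mod (2*m) = m * (a div m mod 2) + a mod m"
    using mod_mult2_eq[of a m 2] by (simp add: mult.commute)
  show "a mod (2*m) div m = a div m mod 2"
    unfolding decomposition by (cases "m = 0") auto
  show "a mod (2*m) mod m = a mod m"
    unfolding decomposition by simp
qed

lemma tendsto_D_div_residue:
  fixes p q w :: nat and ns :: "nat \<Rightarrow> nat"
  assumes p: "0 < p" "p < 4*q" and ns: "strict_mono ns"
    and residue: "\<And>j. ns j * p mod (8*q) = w" and not_dvd: "\<not> 4*q dvd w"
  shows "(\<lambda>j. D (ns j) (real p / (2*real q) - 1) / real (ns j)) \<longlonglongrightarrow> limit_value q w"
proof -
  have q: "0 < q"
    using p by simp
  define t where "t = real (w mod (4*q)) / real (4*q)"
  have "0 < w mod (4*q)" "w mod (4*q) < 4*q"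
    using not_dvd q by (auto simp: dvd_eq_mod_eq_0)
  then have t: "0 < t" "t < 1"
    unfolding t_def by (auto simp: divide_less_eq)
  have mod: "ns j * p mod (4*q) = w mod (4*q)" and div: "ns j * p div (4*q) mod 2 = w div (4*q)" for j
    using mod_double_modulus[of "ns j * p" "4*q"] residue[of j] by simp_all
  have split: "real (ns j) * (real p / (2*real q) - 1 + 1) / 2 = real (ns j * p div (4*q)) + t" for j
  proof -
    have "ns j * p = ns j * p div (4*q) * (4*q) + w mod (4*q)"
      using div_mult_mod_eq[of "ns j * p" "4*q"] mod[of j] by simp
    then have "real (ns j * p) = real (ns j * p div (4*q) * (4*q) + w mod (4*q))"
      by (rule arg_cong)
    then have "real (ns j) * real p = real (ns j * p div (4*q)) * (4 * real q) + real (w mod (4*q))"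
      by simp
    then show ?thesis
      using q by (simp add: t_def field_simps)
  qed
  have sign: "(-1::real)^(ns j * p div (4*q)) = (-1)^(w div (4*q))" for j
    using arg_cong[OF div[of j], of even] by (simp add: minus_one_power_iff)
  have "-1 < real p / (2*real q) - 1" "real p / (2*real q) - 1 < 1"
    using p q by (simp_all add: divide_less_eq)
  then show ?thesis
    unfolding limit_value_def t_def[symmetric]
    by (rule tendsto_D_div[OF _ _ t filterlim_subseq[OF ns] split sign])
qed

lemma dvd_4q_mod_8q_iff: "4*q dvd a mod (8*q) \<longleftrightarrow> 4*q dvd (a::nat)"
  by (rule dvd_mod_iff) simp

lemma node_iff_dvd:
  fixes p q n :: nat
  assumes q: "0 < q" and p: "p \<le> 4*q" and n: "0 < n"
  shows "real p / (2*real q) - 1 \<in> {node k n | k. k \<le> n} \<longleftrightarrow> 4*q dvd n*p"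
proof
  assume "real p / (2*real q) - 1 \<in> {node k n | k. k \<le> n}"
  then obtain k where "real p / (2*real q) = 2 * real k / real n"
    unfolding node_def by auto
  then have "real (n*p) = real (4*q*k)"
    using q n by (simp add: field_simps)
  then show "4*q dvd n*p"
    unfolding of_nat_eq_iff by simp
next
  assume "4*q dvd n*p"
  then obtain k where k: "n*p = 4*q*k" ..
  have "4*q*k \<le> 4*q*n"
    unfolding k[symmetric] using p by (simp add: mult.commute)
  then have "k \<le> n"
    using q by simp
  moreover have "real (n*p) = real (4*q*k)"
    using k by simp
  then have "real p / (2*real q) - 1 = node k n"
    unfolding node_def using q n by (simp add: field_simps)
  ultimately show "real p / (2*real q) - 1 \<in> {node k n | k. k \<le> n}"
    by blast
qed

lemma limit_in_residue_values:
  fixes p q :: nat and ns :: "nat \<Rightarrow> nat" and L :: ereal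
  defines "x \<equiv> real p / (2*real q) - 1"
  assumes p: "0 < p" "p < 4*q" and ns: "strict_mono ns" and reg: "regular x ns"
    and lim: "((\<lambda>j. ereal (D (ns j) x / real (ns j))) \<longlongrightarrow> L) sequentially"
  shows "\<exists>j. \<not> 4*q dvd ns j * p \<and> L = ereal (limit_value q (ns j * p mod (8*q)))"
proof -
  have q: "0 < q"
    using p by simp
  obtain j0 where j0: "\<And>j. j \<ge> j0 \<Longrightarrow> x \<notin> {node k (ns j) | k. k \<le> ns j}"
    using reg unfolding regular_def by blast
  have "finite ((\<lambda>j. ns j * p mod (8*q)) ` UNIV)"
    by (rule finite_subset[of _ "{..<8*q}"]) (use q in auto)
  then obtain j1 where "infinite {j. ns j * p mod (8*q) = ns j1 * p mod (8*q)}"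
    using pigeonhole_infinite[OF infinite_UNIV_nat] by auto
  define S where "S = {j. ns j * p mod (8*q) = ns j1 * p mod (8*q)}"
  have S: "infinite S"
    unfolding S_def by fact
  obtain j where j: "j \<ge> Suc j0" "j \<in> S"
    using infinite_nat_iff_unbounded_le S by blast
  have "0 < ns j"
    using j strict_mono_imp_increasing[OF ns, of j] by simp
  then have "\<not> 4*q dvd ns j * p"
    using j0[of j] j node_iff_dvd[OF q less_imp_le[OF p(2)]] unfolding x_def by auto
  moreover have w: "ns j * p mod (8*q) = ns j1 * p mod (8*q)"
    using j unfolding S_def by simp
  ultimately have not_dvd: "\<not> 4*q dvd ns j1 * p mod (8*q)"
    using dvd_4q_mod_8q_iff[of q "ns j * p"] by simp
  define r where "r = enumerate S"
  have r: "strict_mono r"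
    unfolding r_def using S by (intro strict_monoI enumerate_mono) auto
  have r_residue: "ns (r i) * p mod (8*q) = ns j1 * p mod (8*q)" for i
    using enumerate_in_set[of S i] S unfolding r_def S_def by simp
  have "(\<lambda>i. D (ns (r i)) x / real (ns (r i))) \<longlonglongrightarrow> limit_value q (ns j1 * p mod (8*q))"
    unfolding x_def using tendsto_D_div_residue[OF p strict_mono_o[OF ns r] _ not_dvd] r_residue
    by simp
  then have "(\<lambda>i. ereal (D (ns (r i)) x / real (ns (r i)))) \<longlonglongrightarrow> ereal (limit_value q (ns j1 * p mod (8*q)))"
    by simp
  moreover have "(\<lambda>i. ereal (D (ns (r i)) x / real (ns (r i)))) \<longlonglongrightarrow> L"
    using LIMSEQ_subseq_LIMSEQ[OF lim r] by (simp add: o_def)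
  ultimately have "L = ereal (limit_value q (ns j * p mod (8*q)))"
    unfolding w using LIMSEQ_unique by blast
  then show ?thesis
    using \<open>\<not> 4*q dvd ns j * p\<close> by blast
qed

lemma residue_limit_attained:
  fixes p q c :: nat
  defines "x \<equiv> real p / (2*real q) - 1" and "ns \<equiv> \<lambda>j. c + 8*q*j"
  assumes p: "0 < p" "p < 4*q" and not_dvd: "\<not> 4*q dvd c*p"
  shows "strict_mono ns" and "regular x ns"
    and "((\<lambda>j. ereal (D (ns j) x / real (ns j))) \<longlongrightarrow> ereal (limit_value q (c*p mod (8*q)))) sequentially"
proof -
  have q: "0 < q"
    using p by simp
  show mono: "strict_mono ns"
    unfolding ns_def using q by (intro strict_monoI) simp
  have residue: "ns j * p mod (8*q) = c*p mod (8*q)" for j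
  proof -
    have "ns j * p = c*p + j*p*(8*q)"
      unfolding ns_def by (simp add: algebra_simps)
    then show ?thesis
      by (simp only: mod_mult_self1)
  qed
  have "c \<noteq> 0"
    using not_dvd by (metis dvd_0_right mult_zero_left)
  have "x \<notin> {node k (ns j) | k. k \<le> ns j}" for j
  proof -
    have "0 < ns j"
      unfolding ns_def using \<open>c \<noteq> 0\<close> by simp
    moreover have "\<not> 4*q dvd ns j * p"
      using dvd_4q_mod_8q_iff[of q "ns j * p"] dvd_4q_mod_8q_iff[of q "c * p"] residue[of j] not_dvd
      by simp
    ultimately show ?thesis
      unfolding x_def using node_iff_dvd[OF q less_imp_le[OF p(2)]] by blast
  qed
  then show "regular x ns"
    unfolding regular_def by blast
  show "((\<lambda>j. ereal (D (ns j) x / real (ns j))) \<longlongrightarrow> ereal (limit_value q (c*p mod (8*q)))) sequentially"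
    unfolding lim_ereal x_def
    using tendsto_D_div_residue[OF p mono residue] dvd_4q_mod_8q_iff[of q "c * p"] not_dvd by simp
qed

lemma even_mult_mod_iff:
  fixes n p q :: nat
  assumes "odd p"
  shows "even (n*p mod (8*q)) \<longleftrightarrow> even n"
proof -
  have "even (n*p mod (8*q)) \<longleftrightarrow> even (n*p)"
    by (rule dvd_mod_iff) simp
  then show ?thesis
    using assms by simp
qed

lemma limits_of_parity:
  fixes p q :: nat and e :: bool
  defines "x \<equiv> real p / (2*real q) - 1"
  assumes p: "0 < p" "p < 4*q" "odd p" and coprime: "coprime p q"
  shows "{L. \<exists>ns. strict_mono ns \<and> (\<forall>j. even (ns j) = e) \<and> regular x ns \<and>
             ((\<lambda>j. ereal (D (ns j) x / real (ns j))) \<longlongrightarrow> L) sequentially}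
       = (\<lambda>w. ereal (limit_value q w)) ` {w. w < 8*q \<and> even w = e \<and> \<not> 4*q dvd w}"
proof -
  have q: "0 < q"
    using p by simp
  show ?thesis
  proof (intro equalityI subsetI)
    fix L assume "L \<in> {L. \<exists>ns. strict_mono ns \<and> (\<forall>j. even (ns j) = e) \<and> regular x ns \<and>
               ((\<lambda>j. ereal (D (ns j) x / real (ns j))) \<longlongrightarrow> L) sequentially}"
    then obtain ns where ns: "strict_mono ns" "\<And>j. even (ns j) = e" "regular x ns"
      and lim: "((\<lambda>j. ereal (D (ns j) x / real (ns j))) \<longlongrightarrow> L) sequentially"
      by blast
    obtain j where "\<not> 4*q dvd ns j * p" and L: "L = ereal (limit_value q (ns j * p mod (8*q)))"
      using limit_in_residue_values[OF p(1,2) ns(1) ns(3)[unfolded x_def] lim[unfolded x_def]] by blast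
    then show "L \<in> (\<lambda>w. ereal (limit_value q w)) ` {w. w < 8*q \<and> even w = e \<and> \<not> 4*q dvd w}"
      using q ns(2)[of j] even_mult_mod_iff[OF p(3)] dvd_4q_mod_8q_iff by auto
  next
    fix L assume "L \<in> (\<lambda>w. ereal (limit_value q w)) ` {w. w < 8*q \<and> even w = e \<and> \<not> 4*q dvd w}"
    then obtain w where w: "w < 8*q" "even w = e" "\<not> 4*q dvd w" and L: "L = ereal (limit_value q w)"
      by blast
    have coprime_8q: "coprime p (8*q)"
    proof -
      have "coprime p 2"
        using p(3) by simp
      then have "coprime p (2^3)"
        using coprime_power_right_iff by blast
      then show ?thesis
        using coprime by simp
    qed
    obtain u where "[p * u = 1] (mod (8*q))"
      using cong_solve_coprime_nat[OF coprime_8q] by auto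
    then have "p * u mod (8*q) = 1"
      using q by (simp add: cong_def)
    define c where "c = u * w"
    have "c * p mod (8*q) = w * (p * u mod (8*q)) mod (8*q)"
      unfolding c_def by (simp add: mod_mult_right_eq ac_simps)
    also have "\<dots> = w"
      using \<open>p * u mod (8*q) = 1\<close> w(1) by simp
    finally have residue: "c * p mod (8*q) = w" .
    have "\<not> 4*q dvd c * p"
      using dvd_4q_mod_8q_iff[of q "c * p"] residue w(3) by simp
    moreover have "\<forall>j. even (c + 8*q*j) = e"
      using even_mult_mod_iff[OF p(3), of c q] residue w(2) by simp
    ultimately show "L \<in> {L. \<exists>ns. strict_mono ns \<and> (\<forall>j. even (ns j) = e) \<and> regular x ns \<and>
               ((\<lambda>j. ereal (D (ns j) x / real (ns j))) \<longlongrightarrow> L) sequentially}"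
      unfolding x_def using residue_limit_attained[OF p(1,2)] L residue by blast
  qed
qed

lemma limit_value_eq:
  fixes q b s :: nat
  assumes "0 < q" "s < 4*q"
  shows "limit_value q (4*q*b + s) = (-1)^b * A ((2*real q - real s)^2 / (4*(real q)^2))"
proof -
  have "(4*q*b + s) div (4*q) = b" "(4*q*b + s) mod (4*q) = s"
    using assms by simp_all
  moreover have "(1 - 2 * (real s / real (4*q)))^2 = (2*real q - real s)^2 / (4*(real q)^2)"
    using assms(1) by (simp add: field_simps power2_eq_square)
  ultimately show ?thesis
    unfolding limit_value_def by simp
qed

lemma limit_value_image:
  fixes q :: nat and P :: "nat \<Rightarrow> bool" and g :: "nat \<Rightarrow> real"
  assumes q: "0 < q"
    and arguments: "(\<lambda>s. (2*real q - real s)^2 / (4*(real q)^2)) ` {s. s < 4*q \<and> P s} = g ` {..<q}"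
  shows "(\<lambda>w. ereal (limit_value q w)) ` {w. w < 8*q \<and> P (w mod (4*q))}
       = {L. \<exists>l<q. L = ereal (A (g l)) \<or> L = ereal (- A (g l))}"
proof (intro equalityI subsetI)
  fix L assume "L \<in> (\<lambda>w. ereal (limit_value q w)) ` {w. w < 8*q \<and> P (w mod (4*q))}"
  then obtain w where w: "w < 8*q" "P (w mod (4*q))" and L: "L = ereal (limit_value q w)"
    by blast
  define s where "s = w mod (4*q)"
  have "s < 4*q"
    using q by (simp add: s_def)
  then have "(2*real q - real s)^2 / (4*(real q)^2) \<in> g ` {..<q}"
    unfolding arguments[symmetric] using w(2) s_def by blast
  then obtain l where "l < q" and gl: "g l = (2*real q - real s)^2 / (4*(real q)^2)"
    by auto
  have "L = ereal ((-1)^(w div (4*q)) * A (g l))"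
    using L limit_value_eq[OF q \<open>s < 4*q\<close>, of "w div (4*q)"] gl unfolding s_def
    by (simp add: mult.commute)
  then show "L \<in> {L. \<exists>l<q. L = ereal (A (g l)) \<or> L = ereal (- A (g l))}"
    using \<open>l < q\<close> by (auto simp: minus_one_power_iff)
next
  fix L assume "L \<in> {L. \<exists>l<q. L = ereal (A (g l)) \<or> L = ereal (- A (g l))}"
  then obtain l where "l < q" and L: "L = ereal (A (g l)) \<or> L = ereal (- A (g l))"
    by blast
  then have "g l \<in> (\<lambda>s. (2*real q - real s)^2 / (4*(real q)^2)) ` {s. s < 4*q \<and> P s}"
    unfolding arguments by blast
  then obtain s where s: "s < 4*q" "P s" and gl: "g l = (2*real q - real s)^2 / (4*(real q)^2)"
    by auto
  obtain b :: nat where "b < 2" and "L = ereal ((-1)^b * A (g l))"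
  proof (cases "L = ereal (A (g l))")
    case True
    then show ?thesis
      using that[of 0] by simp
  next
    case False
    then show ?thesis
      using that[of 1] L by simp
  qed
  then have "L = ereal (limit_value q (4*q*b + s))" "4*q*b + s < 8*q" "(4*q*b + s) mod (4*q) = s"
    using limit_value_eq[OF q s(1), of b] gl s(1) by (auto simp: less_2_cases_iff)
  then show "L \<in> (\<lambda>w. ereal (limit_value q w)) ` {w. w < 8*q \<and> P (w mod (4*q))}"
    using s(2) by force
qed

lemma distance_from_2q:
  fixes q s :: nat
  assumes "0 < s" "s < 4*q"
  obtains d where "d < 2*q" "even d \<longleftrightarrow> even s" "real d = \<bar>2*real q - real s\<bar>"
proof (cases "s \<le> 2*q")
  case True
  then show ?thesis
    using assms that[of "2*q - s"] by (simp add: of_nat_diff)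
next
  case False
  then show ?thesis
    using assms that[of "s - 2*q"] by (simp add: of_nat_diff)
qed

lemma odd_arguments:
  fixes q :: nat
  assumes "0 < q"
  shows "(\<lambda>s. (2*real q - real s)^2 / (4*(real q)^2)) ` {s. s < 4*q \<and> odd s}
       = (\<lambda>l. (2*real l + 1)^2 / (4*(real q)^2)) ` {..<q}"
proof (intro equalityI image_subsetI)
  fix s assume "s \<in> {s. s < 4*q \<and> odd s}"
  then have s: "0 < s" "s < 4*q" "odd s"
    by (auto intro: odd_pos)
  obtain d where "d < 2*q" "even d \<longleftrightarrow> even s" and d: "real d = \<bar>2*real q - real s\<bar>"
    by (rule distance_from_2q[OF s(1,2)])
  then have "odd d"
    using s(3) by simp
  obtain l where "d = 2*l + 1"
    using \<open>odd d\<close> by (rule oddE)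
  have "(2*real q - real s)^2 = (real d)^2"
    using d by simp
  then have "l < q" and "(2*real q - real s)^2 = (2*real l + 1)^2"
    using \<open>d < 2*q\<close> \<open>d = 2*l + 1\<close> by simp_all
  then show "(2*real q - real s)^2 / (4*(real q)^2) \<in> (\<lambda>l. (2*real l + 1)^2 / (4*(real q)^2)) ` {..<q}"
    by auto
next
  fix l assume "l \<in> {..<q}"
  then have "2*q - (2*l + 1) \<in> {s. s < 4*q \<and> odd s}" and "real (2*q - (2*l + 1)) = 2*real q - (2*real l + 1)"
    by (auto simp: of_nat_diff)
  then show "(2*real l + 1)^2 / (4*(real q)^2) \<in> (\<lambda>s. (2*real q - real s)^2 / (4*(real q)^2)) ` {s. s < 4*q \<and> odd s}"
    by (intro image_eqI[where x = "2*q - (2*l + 1)"]) simp_all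
qed

lemma even_arguments:
  fixes q :: nat
  assumes "0 < q"
  shows "(\<lambda>s. (2*real q - real s)^2 / (4*(real q)^2)) ` {s. s < 4*q \<and> even s \<and> s \<noteq> 0}
       = (\<lambda>l. (real l)^2 / (real q)^2) ` {..<q}"
proof (intro equalityI image_subsetI)
  fix s assume "s \<in> {s. s < 4*q \<and> even s \<and> s \<noteq> 0}"
  then have s: "0 < s" "s < 4*q" "even s"
    by auto
  obtain d where "d < 2*q" "even d \<longleftrightarrow> even s" and d: "real d = \<bar>2*real q - real s\<bar>"
    by (rule distance_from_2q[OF s(1,2)])
  then have "even d"
    using s(3) by simp
  obtain l where "d = 2*l"
    using \<open>even d\<close> by (rule evenE)
  have "(2*real q - real s)^2 = (real d)^2"
    using d by simp
  then have "l < q" and "(2*real q - real s)^2 / (4*(real q)^2) = (real l)^2 / (real q)^2"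
    using \<open>d < 2*q\<close> \<open>d = 2*l\<close> by (simp_all add: power_mult_distrib)
  then show "(2*real q - real s)^2 / (4*(real q)^2) \<in> (\<lambda>l. (real l)^2 / (real q)^2) ` {..<q}"
    by auto
next
  fix l assume "l \<in> {..<q}"
  then have "2*(q - l) \<in> {s. s < 4*q \<and> even s \<and> s \<noteq> 0}" and "2*real q - real (2*(q - l)) = 2 * real l"
    by (auto simp: of_nat_diff)
  then show "(real l)^2 / (real q)^2 \<in> (\<lambda>s. (2*real q - real s)^2 / (4*(real q)^2)) ` {s. s < 4*q \<and> even s \<and> s \<noteq> 0}"
    by (intro image_eqI[where x = "2*(q - l)"]) (simp_all add: power_mult_distrib)
qed

theorem corollary5:
  fixes p q :: nat
  assumes "p > 0" and "q > 0" and "coprime p q" and "odd p"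
    and "-1 < real p / (2 * real q) - 1" and "real p / (2 * real q) - 1 < 1"
  shows "Oset (real p / (2 * real q)) =
           {L. \<exists>l<q. L = ereal (A ((2 * real l + 1)^2 / (4 * (real q)^2)))
                    \<or> L = ereal (- A ((2 * real l + 1)^2 / (4 * (real q)^2)))}
       \<and> Eset (real p / (2 * real q)) =
           {L. \<exists>l<q. L = ereal (A ((real l)^2 / (real q)^2))
                    \<or> L = ereal (- A ((real l)^2 / (real q)^2))}"
proof -
  have "p < 4*q"
    using assms(2,6) by (simp add: divide_less_eq)
  note limits = limits_of_parity[OF assms(1) this assms(4,3)]
  have parity: "even (w mod (4*q)) \<longleftrightarrow> even w" for w
    by (rule dvd_mod_iff) simp
  have "4*q dvd w \<Longrightarrow> even w" for w
    by (rule dvd_trans[of 2 "4*q"]) simp_all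
  then have "{w. w < 8*q \<and> even w = False \<and> \<not> 4*q dvd w} = {w. w < 8*q \<and> odd (w mod (4*q))}"
    unfolding parity by blast
  then have "Oset (real p / (2 * real q)) =
      (\<lambda>w. ereal (limit_value q w)) ` {w. w < 8*q \<and> odd (w mod (4*q))}"
    using limits[of False] unfolding Oset_def odd_seq_def by simp
  moreover have "{w. w < 8*q \<and> even w = True \<and> \<not> 4*q dvd w}
      = {w. w < 8*q \<and> even (w mod (4*q)) \<and> w mod (4*q) \<noteq> 0}"
    unfolding parity by (simp add: dvd_eq_mod_eq_0)
  then have "Eset (real p / (2 * real q)) =
      (\<lambda>w. ereal (limit_value q w)) ` {w. w < 8*q \<and> even (w mod (4*q)) \<and> w mod (4*q) \<noteq> 0}"
    using limits[of True] unfolding Eset_def even_seq_def by simp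
  ultimately show ?thesis
    using limit_value_image[OF assms(2) odd_arguments[OF assms(2)]]
      limit_value_image[OF assms(2) even_arguments[OF assms(2)]] by simp
qed

end
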